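(* Let $\langle\,,\rangle$ be the bilinear form on $K\{X\}_\infty$ for which the monomials are orthonormal (extended to tensor products by $\langle f_1\otimes f_2,g_1\otimes g_2\rangle=\langle f_1,g_1\rangle\langle f_2,g_2\rangle$), and define $\sqcup\!\sqcup:K\{X\}_\infty\otimes K\{X\}_\infty\to K\{X\}_\infty$ by $\langle g_1\sqcup\!\sqcup g_2,h\rangle=\langle g_1\otimes g_2,\Delta_a(h)\rangle$ for all $h$ (i.e. the graded dual of $\Delta_a$, with $K\{X\}_\infty$ identified with its graded dual via the dual basis of monomials). Then $\sqcup\!\sqcup$ is a commutative associative multiplication with $1\sqcup\!\sqcup1=1$, and for monomials $T^1,T^2$, $$T^1\sqcup\!\sqcup T^2=\sum_{T\text{ a shuffle of }T^1\text{ and }T^2}c_T\,T,$$ where $c_T\ge1$ is the number of subsets $I\subseteq\mathrm{Le}(T)$ with $\mathrm{red}(T|I)=T^1$ and $\mathrm{red}(T|I^c)=T^2$.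
   Context: $K$ is a field of characteristic $0$ and $X=\{x_1,x_2,\dots\}$ a finite or countable set of variables. A planar rooted tree is reduced if no vertex has exactly one incoming edge. $K\{X\}_\infty$ has basis the monomials: the empty tree $1$ and all planar reduced rooted trees with leaves labelled by elements of $X$, graded by number of leaves; for $k\ge2$, $\vee^k$ grafts $k$ nonempty trees (in order) onto a new root, extended multilinearly, with unit conventions (arguments $1$ omitted, $\vee^1=\mathrm{id}$, $\vee^k(1,\dots,1)=1$). The tensor square carries the operations componentwise, and $\Delta_a$ is the unique unital homomorphism with $\Delta_a(x_i)=x_i\otimes1+1\otimes x_i$. $\mathrm{Le}(T)$ is the set of leaves of $T$, $I^c=\mathrm{Le}(T)\setminus I$. The leaf-restriction $T|I$ is obtained from $T$ by deleting every vertex whose full subtree contains no leaf of $I$ (empty tree $1$ if $I=\emptyset$); $\mathrm{red}(S)$ deletes all vertices with exactly one child, keeping labels, the descendant relation and the planar order. $T$ is a shuffle of $T^1$ and $T^2$ if $\mathrm{red}(T|I)=T^1$ and $\mathrm{red}(T|I^c)=T^2$ for some $I\subseteq\mathrm{Le}(T)$. *)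

theory Defs
  imports Main "HOL-Library.Countable"
begin

text \<open>The empty tree 1 is represented by Node [].
  Positions of vertices (hence leaves) are paths: lists of child indices.\<close>

datatype 'x tree = Leaf 'x | Node "'x tree list"

fun reduced :: "'x tree \<Rightarrow> bool" where
  "reduced (Leaf x) = True"
| "reduced (Node ts) = (2 \<le> length ts \<and> (\<forall>t\<in>set ts. reduced t))"

definition is_mono :: "'x tree \<Rightarrow> bool" where
  "is_mono t \<longleftrightarrow> t = Node [] \<or> reduced t"

definition vee_mono :: "'x tree list \<Rightarrow> 'x tree" where
  "vee_mono ts = (let us = filter (\<lambda>t. t \<noteq> Node []) ts in
     (case us of [] \<Rightarrow> Node [] | [u] \<Rightarrow> u | _ \<Rightarrow> Node us))"

fun subtree_at :: "'x tree \<Rightarrow> nat list \<Rightarrow> 'x tree option" where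
  "subtree_at t [] = Some t"
| "subtree_at (Leaf x) (i # p) = None"
| "subtree_at (Node ts) (i # p) = (if i < length ts then subtree_at (ts ! i) p else None)"

definition Le :: "'x tree \<Rightarrow> nat list set" where
  "Le T = {p. \<exists>x. subtree_at T p = Some (Leaf x)}"

text \<open>restr p t I: the tree t (located at position p inside the whole tree) with every
  vertex deleted whose subtree contains no leaf of I; None if nothing remains.\<close>
fun restr :: "nat list \<Rightarrow> 'x tree \<Rightarrow> nat list set \<Rightarrow> 'x tree option"
and restrs :: "nat list \<Rightarrow> nat \<Rightarrow> 'x tree list \<Rightarrow> nat list set \<Rightarrow> 'x tree list" where
  "restr p (Leaf x) I = (if p \<in> I then Some (Leaf x) else None)"
| "restr p (Node ts) I = (case restrs p 0 ts I of [] \<Rightarrow> None | cs \<Rightarrow> Some (Node cs))"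
| "restrs p i [] I = []"
| "restrs p i (t # ts) I =
     (case restr (p @ [i]) t I of
        None \<Rightarrow> restrs p (Suc i) ts I
      | Some s \<Rightarrow> s # restrs p (Suc i) ts I)"

definition leaf_restrict :: "'x tree \<Rightarrow> nat list set \<Rightarrow> 'x tree" where
  "leaf_restrict T I = (case restr [] T I of None \<Rightarrow> Node [] | Some s \<Rightarrow> s)"

fun red :: "'x tree \<Rightarrow> 'x tree" where
  "red (Leaf x) = Leaf x"
| "red (Node [t]) = red t"
| "red (Node ts) = Node (map red ts)"

definition shuffle_sets :: "'x tree \<Rightarrow> 'x tree \<Rightarrow> 'x tree \<Rightarrow> nat list set set" where
  "shuffle_sets T T1 T2 = {I. I \<subseteq> Le T \<and> red (leaf_restrict T I) = T1
                               \<and> red (leaf_restrict T (Le T - I)) = T2}"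

definition is_shuffle :: "'x tree \<Rightarrow> 'x tree \<Rightarrow> 'x tree \<Rightarrow> bool" where
  "is_shuffle T T1 T2 \<longleftrightarrow> (\<exists>I. I \<subseteq> Le T \<and> red (leaf_restrict T I) = T1
                               \<and> red (leaf_restrict T (Le T - I)) = T2)"

definition shuffle_coeff :: "'x tree \<Rightarrow> 'x tree \<Rightarrow> 'x tree \<Rightarrow> nat" where
  "shuffle_coeff T T1 T2 = card (shuffle_sets T T1 T2)"

text \<open>Elements of K{X}_infinity are coefficient functions on trees, finitely supported on
  monomials; elements of the tensor square are coefficient functions on pairs of monomials.\<close>

definition supp :: "('a \<Rightarrow> 'k::zero) \<Rightarrow> 'a set" where
  "supp f = {a. f a \<noteq> 0}"

definition inK :: "('x tree \<Rightarrow> 'k::zero) \<Rightarrow> bool" where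
  "inK f \<longleftrightarrow> finite (supp f) \<and> supp f \<subseteq> {t. is_mono t}"

definition mono_vec :: "'x tree \<Rightarrow> 'x tree \<Rightarrow> 'k::{zero,one}" where
  "mono_vec T = (\<lambda>S. if S = T then 1 else 0)"

definition tensor :: "('x tree \<Rightarrow> 'k::times) \<Rightarrow> ('x tree \<Rightarrow> 'k) \<Rightarrow> ('x tree \<times> 'x tree \<Rightarrow> 'k)" where
  "tensor f g = (\<lambda>(a, b). f a * g b)"

text \<open>Grafting in the tensor square, componentwise and multilinearly:
  vee(a1 (x) b1, ..., ak (x) bk) = vee(a1,...,ak) (x) vee(b1,...,bk).\<close>
definition vee_tens :: "('x tree \<times> 'x tree \<Rightarrow> 'k::comm_ring_1) list \<Rightarrow> ('x tree \<times> 'x tree \<Rightarrow> 'k)" where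
  "vee_tens Gs = (\<lambda>(A, B).
     \<Sum>ps \<in> {ps. length ps = length Gs \<and> (\<forall>i<length Gs. (Gs ! i) (ps ! i) \<noteq> 0)
                 \<and> vee_mono (map fst ps) = A \<and> vee_mono (map snd ps) = B}.
       \<Prod>i<length Gs. (Gs ! i) (ps ! i))"

text \<open>Delta_a on monomials: the unital homomorphism for all grafting operations with
  Delta_a(x) = x (x) 1 + 1 (x) x. Every monomial Node [T1,...,Tk] equals vee^k(T1,...,Tk),
  so the homomorphism property determines it recursively (Node [] = 1 gives 1 (x) 1).\<close>
fun Delta_m :: "'x tree \<Rightarrow> ('x tree \<times> 'x tree \<Rightarrow> 'k::comm_ring_1)" where
  "Delta_m (Leaf x) = (\<lambda>P. (if P = (Leaf x, Node []) then 1 else 0)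
                          + (if P = (Node [], Leaf x) then 1 else 0))"
| "Delta_m (Node ts) = vee_tens (map Delta_m ts)"

definition pair2 :: "('x tree \<times> 'x tree \<Rightarrow> 'k::comm_ring_1) \<Rightarrow> ('x tree \<times> 'x tree \<Rightarrow> 'k) \<Rightarrow> 'k" where
  "pair2 F G = (\<Sum>p \<in> supp F \<inter> supp G. F p * G p)"

definition shuffle :: "('x tree \<Rightarrow> 'k::comm_ring_1) \<Rightarrow> ('x tree \<Rightarrow> 'k) \<Rightarrow> ('x tree \<Rightarrow> 'k)" where
  "shuffle g1 g2 = (\<lambda>T. if is_mono T then pair2 (tensor g1 g2) (Delta_m T) else 0)"

end

theory Submission
  imports Defs "HOL-Library.Multiset"
begin

(* Expanding Delta_a(T) recursively through the grafting operations writes it as a multiset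
   of pairs of monomials. By induction on T, this multiset consists of the pairs
   (red (T|I), red (T|I^c)) for I ranging over all subsets of Le T, since restriction followed by
   reduction commutes with grafting; so the coefficient of T in T1 shuffle T2 is c_T.
   Commutativity and associativity of the shuffle are dual to cocommutativity and
   coassociativity of Delta_a, which hold on the generators and propagate along the
   homomorphism property. The sum is finite because a shuffle of T1 and T2 carries exactly
   the leaf labels of T1 and T2, and a reduced tree has fewer vertices than twice its leaves. *)

section \<open>Products of multisets\<close>

lemma image_mset_sum_mset: "image_mset g (\<Sum>x\<in>#M. f x) = (\<Sum>x\<in>#M. image_mset g (f x))"
  by (induction M) auto

lemma sum_mset_sum_mset: "\<Sum>\<^sub># (\<Sum>x\<in>#M. f x) = (\<Sum>x\<in>#M. \<Sum>\<^sub># (f x))"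
  by (induction M) auto

lemma in_sum_mset_iff: "y \<in># (\<Sum>x\<in>#M. f x) \<longleftrightarrow> (\<exists>x\<in>#M. y \<in># f x)"
  by (induction M) auto

lemma count_sum_mset: "count (\<Sum>x\<in>#M. f x) y = (\<Sum>x\<in>#M. count (f x) y)"
  by (induction M) auto

lemma sum_mset_eq_sum_count:
  assumes "finite S" and "set_mset M \<subseteq> S"
  shows "(\<Sum>x\<in>#M. f x) = (\<Sum>x\<in>S. of_nat (count M x) * (f x :: 'a::semiring_1))"
  using assms(2)
proof (induction M)
  case empty
  then show ?case by simp
next
  case (add a M)
  have "(\<Sum>x\<in>S. of_nat (count (add_mset a M) x) * f x)
      = (\<Sum>x\<in>S. of_nat (count M x) * f x + (if x = a then f x else 0))"
    by (intro sum.cong) (auto simp: algebra_simps)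
  also have "\<dots> = (\<Sum>x\<in>S. of_nat (count M x) * f x) + f a"
    using add.prems assms(1) by (simp add: sum.distrib)
  finally show ?case
    using add by (simp add: add.commute)
qed

fun listset_mset :: "'a multiset list \<Rightarrow> 'a list multiset" where
  "listset_mset [] = {#[]#}"
| "listset_mset (M # Ms) = (\<Sum>x\<in>#M. image_mset ((#) x) (listset_mset Ms))"

lemma count_listset_mset_Cons:
  "count (listset_mset (M # Ms)) (y # ys) = count M y * count (listset_mset Ms) ys"
proof -
  have "count (image_mset ((#) x) L) (y # ys) = (if x = y then count L ys else 0)" for x L
    by (induction L) auto
  then show ?thesis
    by (simp add: count_sum_mset sum_mset_delta mult.commute)
qed

lemma count_listset_mset:
  "count (listset_mset Ms) xs =
     (if length xs = length Ms then \<Prod>i<length Ms. count (Ms ! i) (xs ! i) else 0)"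
proof (induction Ms arbitrary: xs)
  case Nil
  then show ?case by (cases xs) auto
next
  case (Cons M Ms)
  show ?case
  proof (cases xs)
    case Nil
    then show ?thesis by (auto simp: count_sum_mset count_eq_zero_iff)
  next
    case (Cons y ys)
    then show ?thesis
      using Cons.IH[of ys]
      by (simp add: count_listset_mset_Cons prod.lessThan_Suc_shift
               del: listset_mset.simps prod.lessThan_Suc)
  qed
qed

lemma in_listset_mset: "xs \<in># listset_mset Ms \<longleftrightarrow> list_all2 (\<lambda>x M. x \<in># M) xs Ms"
  by (induction Ms arbitrary: xs) (auto simp: in_sum_mset_iff list_all2_Cons2)

lemma listset_mset_image:
  "listset_mset (map (\<lambda>x. image_mset (f x) (h x)) xs)
     = image_mset (\<lambda>ys. map2 f xs ys) (listset_mset (map h xs))"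
  by (induction xs) (simp_all add: image_mset_sum_mset multiset.map_comp o_def)

lemma listset_mset_map_image:
  "listset_mset (map (image_mset f) Ms) = image_mset (map f) (listset_mset Ms)"
  by (induction Ms) (simp_all add: image_mset_sum_mset multiset.map_comp o_def)

lemma listset_mset_sum_mset:
  "listset_mset (map (\<lambda>x. \<Sum>y\<in>#h x. F y) xs)
     = (\<Sum>ys\<in>#listset_mset (map h xs). listset_mset (map F ys))"
proof (induction xs)
  case Nil
  then show ?case by simp
next
  case (Cons a xs)
  let ?L = "listset_mset (map h xs)"
  have "listset_mset (map (\<lambda>x. \<Sum>y\<in>#h x. F y) (a # xs))
      = (\<Sum>y\<in>#h a. \<Sum>z\<in>#F y. \<Sum>ys\<in>#?L. image_mset ((#) z) (listset_mset (map F ys)))"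
    by (simp add: Cons.IH sum_mset_sum_mset image_mset_sum_mset)
  also have "\<dots> = (\<Sum>y\<in>#h a. \<Sum>ys\<in>#?L. \<Sum>z\<in>#F y. image_mset ((#) z) (listset_mset (map F ys)))"
    by (simp only: sum_mset.swap[where A = "F _"])
  also have "\<dots> = (\<Sum>ys\<in>#listset_mset (map h (a # xs)). listset_mset (map F ys))"
    by (simp add: sum_mset_sum_mset image_mset_sum_mset multiset.map_comp o_def)
  finally show ?case .
qed

lemma image_mset_listset_mset_filter:
  assumes "\<And>ys zs. f (ys @ u # zs) = f (ys @ zs)"
    and "\<And>x. x \<in> set xs \<Longrightarrow> \<not> P x \<Longrightarrow> M x = {#u#}"
  shows "image_mset f (listset_mset (map M xs)) = image_mset f (listset_mset (map M (filter P xs)))"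
  using assms
proof (induction xs arbitrary: f)
  case Nil
  then show ?case by simp
next
  case (Cons a xs)
  show ?case
  proof (cases "P a")
    case True
    have "image_mset (\<lambda>zs. f (y # zs)) (listset_mset (map M xs))
        = image_mset (\<lambda>zs. f (y # zs)) (listset_mset (map M (filter P xs)))" for y
      by (rule Cons.IH) (use Cons.prems in \<open>simp_all del: append_Cons add: append_Cons[symmetric]\<close>)
    then show ?thesis
      using True by (simp add: image_mset_sum_mset multiset.map_comp o_def)
  next
    case False
    have "f (u # zs) = f zs" for zs
      using Cons.prems(1)[of "[]"] by simp
    then show ?thesis
      using False Cons by (simp add: multiset.map_comp o_def)
  qed
qed

lemma listset_mset_mset_set:
  assumes "\<forall>A\<in>set As. finite A"
  shows "listset_mset (map mset_set As) = mset_set {xs. list_all2 (\<in>) xs As}"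
proof -
  let ?S = "{xs. list_all2 (\<in>) xs As}"
  have count: "count (listset_mset (map mset_set As)) xs = (if xs \<in> ?S then 1 else 0)" for xs
    using assms by (auto simp: count_listset_mset count_mset_set' list_all2_conv_all_nth
                         intro!: prod.neutral)
  then have "set_mset (listset_mset (map mset_set As)) = ?S"
    by (auto simp flip: count_greater_zero_iff split: if_splits)
  then have "finite ?S"
    by (metis finite_set_mset)
  then show ?thesis
    by (intro multiset_eqI) (simp add: count count_mset_set')
qed

lemma UN_Int_disjoint:
  assumes "\<And>i. i \<in> K \<Longrightarrow> A i \<subseteq> B i"
    and "\<And>i j. i \<in> K \<Longrightarrow> j \<in> K \<Longrightarrow> i \<noteq> j \<Longrightarrow> B i \<inter> B j = {}"
    and "j \<in> K"
  shows "(\<Union>i\<in>K. A i) \<inter> B j = A j"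
proof
  show "(\<Union>i\<in>K. A i) \<inter> B j \<subseteq> A j"
  proof
    fix x assume "x \<in> (\<Union>i\<in>K. A i) \<inter> B j"
    then obtain i where "i \<in> K" "x \<in> A i" "x \<in> B j"
      by blast
    moreover from this have "i = j"
      using assms by blast
    ultimately show "x \<in> A j"
      by simp
  qed
  show "A j \<subseteq> (\<Union>i\<in>K. A i) \<inter> B j"
    using assms(1,3) by blast
qed

lemma UN_Diff_UN_disjoint:
  assumes "\<And>i. i \<in> K \<Longrightarrow> A i \<subseteq> B i"
    and "\<And>i j. i \<in> K \<Longrightarrow> j \<in> K \<Longrightarrow> i \<noteq> j \<Longrightarrow> B i \<inter> B j = {}"
  shows "(\<Union>i\<in>K. B i) - (\<Union>i\<in>K. A i) = (\<Union>i\<in>K. B i - A i)"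
proof -
  have "x \<notin> (\<Union>i\<in>K. A i)" if "j \<in> K" "x \<in> B j - A j" for j x
    using UN_Int_disjoint[of K A B j, OF assms that(1)] that by blast
  then show ?thesis
    by blast
qed

lemma mset_set_Pow_UN:
  assumes "\<And>i. i < k \<Longrightarrow> finite (A i)"
    and "\<And>i j. i < k \<Longrightarrow> j < k \<Longrightarrow> i \<noteq> j \<Longrightarrow> A i \<inter> A j = {}"
  shows "mset_set (Pow (\<Union>i<k. A i))
       = image_mset (\<lambda>Is. \<Union>i<k. Is ! i) (listset_mset (map (\<lambda>i. mset_set (Pow (A i))) [0..<k]))"
proof -
  define U where "U = (\<lambda>Is :: 'a set list. \<Union>i<k. Is ! i)"
  define S where "S = {Is. length Is = k \<and> (\<forall>i<k. Is ! i \<subseteq> A i)}"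
  have restrict: "U Is \<inter> A i = Is ! i" if "Is \<in> S" "i < k" for Is i
    using that assms(2) UN_Int_disjoint[of "{..<k}" "(!) Is" A i] by (simp add: U_def S_def)
  have "inj_on U S"
  proof (rule inj_onI, rule nth_equalityI)
    fix Is Js assume IJ: "Is \<in> S" "Js \<in> S" "U Is = U Js"
    then show "length Is = length Js"
      by (simp add: S_def)
    show "Is ! i = Js ! i" if "i < length Is" for i
      using IJ that restrict[OF IJ(1)] restrict[OF IJ(2)] by (simp add: S_def)
  qed
  moreover have "U ` S = Pow (\<Union>i<k. A i)"
  proof
    show "U ` S \<subseteq> Pow (\<Union>i<k. A i)"
      by (auto simp: U_def S_def)
    show "Pow (\<Union>i<k. A i) \<subseteq> U ` S"
    proof
      fix I assume "I \<in> Pow (\<Union>i<k. A i)"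
      then have "I = U (map (\<lambda>i. I \<inter> A i) [0..<k])" and "map (\<lambda>i. I \<inter> A i) [0..<k] \<in> S"
        by (auto simp: U_def S_def)
      then show "I \<in> U ` S" by blast
    qed
  qed
  moreover have "listset_mset (map (\<lambda>i. mset_set (Pow (A i))) [0..<k]) = mset_set S"
  proof -
    have "{Is. list_all2 (\<in>) Is (map (\<lambda>i. Pow (A i)) [0..<k])} = S"
      unfolding S_def list_all2_conv_all_nth by auto blast
    then show ?thesis
      using listset_mset_mset_set[of "map (\<lambda>i. Pow (A i)) [0..<k]"] assms(1)
      by (simp add: o_def)
  qed
  ultimately show ?thesis
    by (simp add: U_def image_mset_mset_set)
qed

section \<open>The coproduct as a multiset of pairs\<close>

lemma vee_mono_filter: "vee_mono (filter (\<lambda>t. t \<noteq> Node []) ts) = vee_mono ts"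
  by (simp add: vee_mono_def)

lemma vee_mono_append_unit: "vee_mono (ts @ Node [] # us) = vee_mono (ts @ us)"
  by (simp add: vee_mono_def)

lemma vee_mono_Nil [simp]: "vee_mono [] = Node []"
  by (simp add: vee_mono_def)

lemma vee_mono_single [simp]: "vee_mono [t] = t"
  by (simp add: vee_mono_def)

lemma vee_mono_eq_Node:
  assumes "Node [] \<notin> set ts" and "2 \<le> length ts"
  shows "vee_mono ts = Node ts"
proof -
  obtain t1 t2 us where "ts = t1 # t2 # us"
    using assms(2) by (metis One_nat_def Suc_1 Suc_le_length_iff)
  moreover have "filter (\<lambda>t. t \<noteq> Node []) ts = ts"
    using assms(1) by (auto simp: filter_id_conv)
  ultimately show ?thesis
    by (simp add: vee_mono_def)
qed

definition vee_pair :: "('x tree \<times> 'x tree) list \<Rightarrow> 'x tree \<times> 'x tree" where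
  "vee_pair ps = (vee_mono (map fst ps), vee_mono (map snd ps))"

fun Delta_mset :: "'x tree \<Rightarrow> ('x tree \<times> 'x tree) multiset" where
  "Delta_mset (Leaf x) = {#(Leaf x, Node []), (Node [], Leaf x)#}"
| "Delta_mset (Node ts) = image_mset vee_pair (listset_mset (map Delta_mset ts))"

lemma vee_pair_Nil [simp]: "vee_pair [] = (Node [], Node [])"
  by (simp add: vee_pair_def)

lemma Delta_m_eq_count_Delta_mset:
  "(Delta_m T :: _ \<Rightarrow> 'k::{comm_ring_1,ring_char_0}) = (\<lambda>P. of_nat (count (Delta_mset T) P))"
proof (induction T)
  case (Leaf x)
  show ?case by (rule ext) simp
next
  case (Node ts)
  have IH: "(Delta_m (ts ! i) :: _ \<Rightarrow> 'k) = (\<lambda>P. of_nat (count (Delta_mset (ts ! i)) P))"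
    if "i < length ts" for i
    using Node that by simp
  show ?case
  proof (rule ext, clarify)
    fix A B :: "'a tree"
    let ?L = "listset_mset (map Delta_mset ts)"
    have terms: "{ps. length ps = length (map Delta_m ts)
                   \<and> (\<forall>i<length (map Delta_m ts). ((map Delta_m ts ! i) (ps ! i) :: 'k) \<noteq> 0)
                   \<and> vee_mono (map fst ps) = A \<and> vee_mono (map snd ps) = B}
               = vee_pair -` {(A, B)} \<inter> set_mset ?L"
      by (auto simp: in_listset_mset list_all2_conv_all_nth vee_pair_def IH)
    have "(Delta_m (Node ts) :: _ \<Rightarrow> 'k) (A, B)
        = (\<Sum>ps \<in> vee_pair -` {(A, B)} \<inter> set_mset ?L. \<Prod>i<length ts. (Delta_m (ts ! i) :: _ \<Rightarrow> 'k) (ps ! i))"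
      by (simp only: Delta_m.simps vee_tens_def terms split) simp
    also have "\<dots> = (\<Sum>ps \<in> vee_pair -` {(A, B)} \<inter> set_mset ?L. of_nat (count ?L ps))"
      by (intro sum.cong refl)
         (auto simp: count_listset_mset in_listset_mset list_all2_lengthD IH)
    also have "\<dots> = of_nat (count (Delta_mset (Node ts)) (A, B))"
      by (simp add: count_image_mset)
    finally show "(Delta_m (Node ts) :: _ \<Rightarrow> 'k) (A, B) = of_nat (count (Delta_mset (Node ts)) (A, B))" .
  qed
qed

lemma Delta_mset_vee_mono:
  "Delta_mset (vee_mono ts) = image_mset vee_pair (listset_mset (map Delta_mset ts))"
proof -
  let ?us = "filter (\<lambda>t. t \<noteq> Node []) ts"
  have "image_mset vee_pair (listset_mset (map Delta_mset ts))
      = image_mset vee_pair (listset_mset (map Delta_mset ?us))"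
    by (rule image_mset_listset_mset_filter[where u = "(Node [], Node [])"])
       (auto simp: vee_pair_def vee_mono_append_unit)
  moreover have "Delta_mset (vee_mono ?us) = image_mset vee_pair (listset_mset (map Delta_mset ?us))"
  proof (cases ?us rule: remdups_adj.cases)
    case 1
    then show ?thesis by simp
  next
    case (2 u)
    then show ?thesis by (simp add: vee_pair_def multiset.map_comp o_def)
  next
    case (3 u1 u2 us)
    have "vee_mono ?us = Node ?us"
      by (rule vee_mono_eq_Node) (simp, simp add: 3)
    then show ?thesis by simp
  qed
  ultimately show ?thesis
    by (simp add: vee_mono_filter)
qed

lemma Delta_mset_swap: "image_mset prod.swap (Delta_mset T) = Delta_mset T"
proof (induction T)
  case (Leaf x)
  then show ?case by simp
next
  case (Node ts)
  have swap: "prod.swap (vee_pair ps) = vee_pair (map prod.swap ps)" for ps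
    by (simp add: vee_pair_def o_def)
  have "image_mset prod.swap (Delta_mset (Node ts))
      = image_mset vee_pair (image_mset (map prod.swap) (listset_mset (map Delta_mset ts)))"
    by (simp add: multiset.map_comp o_def swap)
  also have "\<dots> = image_mset vee_pair (listset_mset (map (image_mset prod.swap \<circ> Delta_mset) ts))"
    by (simp flip: listset_mset_map_image)
  finally show ?case
    using Node by (simp cong: map_cong)
qed

definition vee_triple :: "('x tree \<times> 'x tree \<times> 'x tree) list \<Rightarrow> 'x tree \<times> 'x tree \<times> 'x tree" where
  "vee_triple xs = (vee_mono (map fst xs), vee_mono (map (fst \<circ> snd) xs), vee_mono (map (snd \<circ> snd) xs))"

definition Delta_iter_left :: "'x tree \<Rightarrow> ('x tree \<times> 'x tree \<times> 'x tree) multiset" where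
  "Delta_iter_left T = (\<Sum>(S, C)\<in>#Delta_mset T. image_mset (\<lambda>(A, B). (A, B, C)) (Delta_mset S))"

definition Delta_iter_right :: "'x tree \<Rightarrow> ('x tree \<times> 'x tree \<times> 'x tree) multiset" where
  "Delta_iter_right T = (\<Sum>(A, S)\<in>#Delta_mset T. image_mset (\<lambda>(B, C). (A, B, C)) (Delta_mset S))"

lemma sum_Delta_mset_Node:
  assumes "\<And>ps. F (vee_pair ps) = image_mset vee_triple (listset_mset (map F ps))"
  shows "(\<Sum>P\<in>#Delta_mset (Node ts). F P)
       = image_mset vee_triple (listset_mset (map (\<lambda>t. \<Sum>P\<in>#Delta_mset t. F P) ts))"
  by (simp add: assms listset_mset_sum_mset image_mset_sum_mset multiset.map_comp o_def)

lemma Delta_iter_left_Node: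
  "Delta_iter_left (Node ts) = image_mset vee_triple (listset_mset (map Delta_iter_left ts))"
proof -
  define F :: "'a tree \<times> 'a tree \<Rightarrow> ('a tree \<times> 'a tree \<times> 'a tree) multiset"
    where "F = (\<lambda>(S, C). image_mset (\<lambda>(A, B). (A, B, C)) (Delta_mset S))"
  have compat: "F (vee_pair ps) = image_mset vee_triple (listset_mset (map F ps))" for ps
  proof -
    have "map F ps = map (\<lambda>p. image_mset ((\<lambda>p (A, B). (A, B, snd p)) p) (Delta_mset (fst p))) ps"
      by (simp add: F_def split_def)
    then have "image_mset vee_triple (listset_mset (map F ps))
        = image_mset (\<lambda>qs. vee_triple (map2 (\<lambda>p (A, B). (A, B, snd p)) ps qs))
            (listset_mset (map Delta_mset (map fst ps)))"
      by (simp only: listset_mset_image) (simp add: multiset.map_comp o_def)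
    also have "\<dots> = image_mset (\<lambda>qs. (\<lambda>(A, B). (A, B, vee_mono (map snd ps))) (vee_pair qs))
            (listset_mset (map Delta_mset (map fst ps)))"
      by (rule image_mset_cong)
         (auto simp: in_listset_mset list_all2_lengthD vee_triple_def vee_pair_def split_def
               intro!: arg_cong[where f = vee_mono] nth_equalityI)
    also have "\<dots> = F (vee_pair ps)"
      by (simp add: F_def vee_pair_def Delta_mset_vee_mono multiset.map_comp o_def)
    finally show ?thesis ..
  qed
  have Delta_iter_left_eq: "Delta_iter_left = (\<lambda>T. \<Sum>P\<in>#Delta_mset T. F P)"
    by (simp add: fun_eq_iff Delta_iter_left_def F_def)
  show ?thesis
    unfolding Delta_iter_left_eq by (rule sum_Delta_mset_Node[OF compat])
qed

lemma Delta_iter_right_Node: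
  "Delta_iter_right (Node ts) = image_mset vee_triple (listset_mset (map Delta_iter_right ts))"
proof -
  define F :: "'a tree \<times> 'a tree \<Rightarrow> ('a tree \<times> 'a tree \<times> 'a tree) multiset"
    where "F = (\<lambda>(A, S). image_mset (\<lambda>(B, C). (A, B, C)) (Delta_mset S))"
  have compat: "F (vee_pair ps) = image_mset vee_triple (listset_mset (map F ps))" for ps
  proof -
    have "map F ps = map (\<lambda>p. image_mset ((\<lambda>p (B, C). (fst p, B, C)) p) (Delta_mset (snd p))) ps"
      by (simp add: F_def split_def)
    then have "image_mset vee_triple (listset_mset (map F ps))
        = image_mset (\<lambda>qs. vee_triple (map2 (\<lambda>p (B, C). (fst p, B, C)) ps qs))
            (listset_mset (map Delta_mset (map snd ps)))"
      by (simp only: listset_mset_image) (simp add: multiset.map_comp o_def)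
    also have "\<dots> = image_mset (\<lambda>qs. (\<lambda>(B, C). (vee_mono (map fst ps), B, C)) (vee_pair qs))
            (listset_mset (map Delta_mset (map snd ps)))"
      by (rule image_mset_cong)
         (auto simp: in_listset_mset list_all2_lengthD vee_triple_def vee_pair_def split_def
               intro!: arg_cong[where f = vee_mono] nth_equalityI)
    also have "\<dots> = F (vee_pair ps)"
      by (simp add: F_def vee_pair_def Delta_mset_vee_mono multiset.map_comp o_def)
    finally show ?thesis ..
  qed
  have Delta_iter_right_eq: "Delta_iter_right = (\<lambda>T. \<Sum>P\<in>#Delta_mset T. F P)"
    by (simp add: fun_eq_iff Delta_iter_right_def F_def)
  show ?thesis
    unfolding Delta_iter_right_eq by (rule sum_Delta_mset_Node[OF compat])
qed

lemma Delta_mset_coassoc: "Delta_iter_left T = Delta_iter_right T"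
proof (induction T)
  case (Leaf x)
  show ?case by (simp add: Delta_iter_left_def Delta_iter_right_def vee_pair_def add_mset_commute)
next
  case (Node ts)
  then show ?case
    by (simp add: Delta_iter_left_Node Delta_iter_right_Node cong: map_cong)
qed

section \<open>Terms of the coproduct as leaf subsets\<close>

(* red (T|I) computed bottom-up, for the subtree T at position p of the whole tree. *)
fun restrict_red :: "nat list \<Rightarrow> 'x tree \<Rightarrow> nat list set \<Rightarrow> 'x tree"
and restrict_reds :: "nat list \<Rightarrow> nat \<Rightarrow> 'x tree list \<Rightarrow> nat list set \<Rightarrow> 'x tree list" where
  "restrict_red p (Leaf x) I = (if p \<in> I then Leaf x else Node [])"
| "restrict_red p (Node ts) I = vee_mono (restrict_reds p 0 ts I)"
| "restrict_reds p i [] I = []"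
| "restrict_reds p i (t # ts) I = restrict_red (p @ [i]) t I # restrict_reds p (Suc i) ts I"

lemma restrict_red_eq_red_restr:
  fixes T :: "'x tree" and ts :: "'x tree list"
  shows "restrict_red p T I = (case restr p T I of None \<Rightarrow> Node [] | Some s \<Rightarrow> red s)
   \<and> (\<forall>s. restr p T I = Some s \<longrightarrow> red s \<noteq> Node [])"
    and "filter (\<lambda>t. t \<noteq> Node []) (restrict_reds p i ts I) = map red (restrs p i ts I)
   \<and> (\<forall>s\<in>set (restrs p i ts I). red s \<noteq> Node [])"
proof (induction p T I and p i ts I rule: restr_restrs.induct)
  case (1 p x I)
  then show ?case by simp
next
  case (2 p ts I)
  then have vee: "restrict_red p (Node ts) I = vee_mono (map red (restrs p 0 ts I))"
    by (metis restrict_red.simps(2) vee_mono_filter)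
  show ?case
  proof (cases "restrs p 0 ts I" rule: remdups_adj.cases)
    case 1
    then show ?thesis using vee by simp
  next
    case (2 c)
    then show ?thesis using vee "2.IH" by simp
  next
    case (3 c1 c2 cs)
    then show ?thesis using vee "2.IH" by (fastforce intro!: vee_mono_eq_Node)
  qed
next
  case (3 p i I)
  then show ?case by simp
next
  case (4 p i t ts I)
  then show ?case by (auto split: option.splits)
qed

lemma red_leaf_restrict: "red (leaf_restrict T I) = restrict_red [] T I"
  by (simp add: leaf_restrict_def restrict_red_eq_red_restr(1) split: option.split)

lemma restrict_reds_eq_map:
  "restrict_reds p i ts I = map (\<lambda>j. restrict_red (p @ [i + j]) (ts ! j) I) [0..<length ts]"
proof (induction ts arbitrary: i)
  case Nil
  then show ?case by simp
next
  case (Cons t ts)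
  then show ?case
    by (simp add: map_upt_Suc del: upt_Suc)
qed

lemma restrict_red_Node:
  "restrict_red p (Node ts) I = vee_mono (map (\<lambda>j. restrict_red (p @ [j]) (ts ! j) I) [0..<length ts])"
  by (simp add: restrict_reds_eq_map)

lemma is_mono_vee_mono:
  assumes "\<forall>t\<in>set ts. is_mono t"
  shows "is_mono (vee_mono ts)"
proof -
  let ?us = "filter (\<lambda>t. t \<noteq> Node []) ts"
  have "\<forall>u\<in>set ?us. reduced u"
    using assms by (auto simp: is_mono_def)
  then show ?thesis
    by (cases ?us rule: remdups_adj.cases) (simp_all add: vee_mono_def is_mono_def)
qed

lemma is_mono_restrict_red: "is_mono (restrict_red p T I)"
proof (induction T arbitrary: p)
  case (Leaf x)
  then show ?case by (simp add: is_mono_def)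
next
  case (Node ts)
  then show ?case
    by (simp only: restrict_red_Node) (auto intro!: is_mono_vee_mono)
qed

lemma Le_Leaf [simp]: "Le (Leaf x) = {[]}"
proof (rule set_eqI)
  show "p \<in> Le (Leaf x) \<longleftrightarrow> p \<in> {[]}" for p
    by (cases p) (auto simp: Le_def)
qed

lemma Le_Node: "Le (Node ts) = (\<Union>i<length ts. (#) i ` Le (ts ! i))"
proof (rule set_eqI)
  show "p \<in> Le (Node ts) \<longleftrightarrow> p \<in> (\<Union>i<length ts. (#) i ` Le (ts ! i))" for p
    by (cases p) (auto simp: Le_def)
qed

lemma finite_Le: "finite (Le T)"
  by (induction T) (auto simp: Le_Node)

definition leaves_at :: "nat list \<Rightarrow> 'x tree \<Rightarrow> nat list set" where
  "leaves_at p T = (@) p ` Le T"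

lemma leaves_at_Leaf [simp]: "leaves_at p (Leaf x) = {p}"
  by (simp add: leaves_at_def)

lemma leaves_at_Node: "leaves_at p (Node ts) = (\<Union>i<length ts. leaves_at (p @ [i]) (ts ! i))"
  by (auto simp: leaves_at_def Le_Node)

lemma finite_leaves_at: "finite (leaves_at p T)"
  by (simp add: leaves_at_def finite_Le)

lemma restrict_red_cong:
  assumes "I \<inter> leaves_at p T = J \<inter> leaves_at p T"
  shows "restrict_red p T I = restrict_red p T J"
  using assms
proof (induction T arbitrary: p)
  case (Leaf x)
  then show ?case by auto
next
  case (Node ts)
  have "restrict_red (p @ [j]) (ts ! j) I = restrict_red (p @ [j]) (ts ! j) J" if "j < length ts" for j
  proof (rule Node.IH)
    show "ts ! j \<in> set ts"
      using that by simp
    show "I \<inter> leaves_at (p @ [j]) (ts ! j) = J \<inter> leaves_at (p @ [j]) (ts ! j)"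
      using Node.prems that by (auto simp: leaves_at_Node)
  qed
  then show ?case
    by (simp only: restrict_red_Node) (auto intro!: arg_cong[where f = vee_mono])
qed

lemma leaves_at_disjoint:
  "i \<noteq> j \<Longrightarrow> leaves_at (p @ [i]) t \<inter> leaves_at (p @ [j]) u = {}"
  by (auto simp: leaves_at_def)

lemma restrict_red_Node_UN:
  assumes "length Is = length ts" and "\<And>i. i < length ts \<Longrightarrow> Is ! i \<subseteq> leaves_at (p @ [i]) (ts ! i)"
  shows "restrict_red p (Node ts) (\<Union>i<length ts. Is ! i)
       = vee_mono (map (\<lambda>i. restrict_red (p @ [i]) (ts ! i) (Is ! i)) [0..<length ts])"
proof -
  have "(\<Union>i<length ts. Is ! i) \<inter> leaves_at (p @ [j]) (ts ! j) = Is ! j"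
    if "j < length ts" for j
    by (rule UN_Int_disjoint[where B = "\<lambda>i. leaves_at (p @ [i]) (ts ! i)"])
       (use that assms(2) in \<open>auto simp: leaves_at_disjoint\<close>)
  then have "(\<Union>i<length ts. Is ! i) \<inter> leaves_at (p @ [j]) (ts ! j)
           = Is ! j \<inter> leaves_at (p @ [j]) (ts ! j)" if "j < length ts" for j
    using that assms(2) by (simp add: Int_absorb2)
  then show ?thesis
    unfolding restrict_red_Node
    by (intro arg_cong[where f = vee_mono] map_cong refl restrict_red_cong) simp
qed

lemma leaves_at_Node_Diff_UN:
  assumes "\<And>i. i < length ts \<Longrightarrow> Is ! i \<subseteq> leaves_at (p @ [i]) (ts ! i)"
  shows "leaves_at p (Node ts) - (\<Union>i<length ts. Is ! i)
       = (\<Union>i<length ts. leaves_at (p @ [i]) (ts ! i) - Is ! i)"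
  unfolding leaves_at_Node
  by (rule UN_Diff_UN_disjoint) (use assms in \<open>auto simp: leaves_at_disjoint\<close>)

lemma Delta_mset_eq_leaf_subsets:
  "Delta_mset T = image_mset (\<lambda>I. (restrict_red p T I, restrict_red p T (leaves_at p T - I)))
                    (mset_set (Pow (leaves_at p T)))"
proof (induction T arbitrary: p)
  case (Leaf x)
  have "Pow {p} = {{}, {p}}" by auto
  then show ?case by simp
next
  case (Node ts)
  define k where "k = length ts"
  define L where "L = (\<lambda>i. leaves_at (p @ [i]) (ts ! i))"
  define R where "R = (\<lambda>i. restrict_red (p @ [i]) (ts ! i))"
  define H where "H = (\<lambda>I. (restrict_red p (Node ts) I, restrict_red p (Node ts) (leaves_at p (Node ts) - I)))"
  let ?Subsets = "listset_mset (map (\<lambda>i. mset_set (Pow (L i))) [0..<k])"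
  have "map Delta_mset ts = map (\<lambda>i. image_mset (\<lambda>I. (R i I, R i (L i - I))) (mset_set (Pow (L i)))) [0..<k]"
    by (rule nth_equalityI) (auto simp: k_def R_def L_def Node.IH)
  then have "Delta_mset (Node ts)
      = image_mset (\<lambda>Is. vee_pair (map2 (\<lambda>i I. (R i I, R i (L i - I))) [0..<k] Is)) ?Subsets"
    by (simp add: listset_mset_image multiset.map_comp o_def)
  also have "\<dots> = image_mset (\<lambda>Is. H (\<Union>i<k. Is ! i)) ?Subsets"
  proof (rule image_mset_cong)
    fix Is assume "Is \<in># ?Subsets"
    then have len: "length Is = k" and sub: "\<And>i. i < k \<Longrightarrow> Is ! i \<subseteq> L i"
      by (force simp: in_listset_mset list_all2_conv_all_nth L_def finite_leaves_at)+
    let ?Js = "map (\<lambda>i. L i - Is ! i) [0..<k]"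
    have "restrict_red p (Node ts) (\<Union>i<k. Is ! i) = vee_mono (map (\<lambda>i. R i (Is ! i)) [0..<k])"
      using restrict_red_Node_UN[of Is ts p] len sub by (simp add: k_def L_def R_def)
    moreover have "restrict_red p (Node ts) (\<Union>i<k. ?Js ! i) = vee_mono (map (\<lambda>i. R i (?Js ! i)) [0..<k])"
      using restrict_red_Node_UN[of ?Js ts p] sub by (simp add: k_def L_def R_def)
    moreover have "leaves_at p (Node ts) - (\<Union>i<k. Is ! i) = (\<Union>i<k. ?Js ! i)"
      using leaves_at_Node_Diff_UN[of ts Is p] sub by (simp add: k_def L_def)
    moreover have "map fst (map2 (\<lambda>i I. (R i I, R i (L i - I))) [0..<k] Is) = map (\<lambda>i. R i (Is ! i)) [0..<k]"
      and "map snd (map2 (\<lambda>i I. (R i I, R i (L i - I))) [0..<k] Is) = map (\<lambda>i. R i (?Js ! i)) [0..<k]"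
      by (auto simp: len intro!: nth_equalityI)
    ultimately show "vee_pair (map2 (\<lambda>i I. (R i I, R i (L i - I))) [0..<k] Is) = H (\<Union>i<k. Is ! i)"
      by (simp only: H_def vee_pair_def)
  qed
  also have "\<dots> = image_mset H (mset_set (Pow (leaves_at p (Node ts))))"
    unfolding leaves_at_Node k_def[symmetric] L_def[symmetric]
    by (subst mset_set_Pow_UN) (auto simp: L_def finite_leaves_at leaves_at_disjoint multiset.map_comp o_def)
  finally show ?case
    by (simp add: H_def)
qed

lemma count_Delta_mset: "count (Delta_mset T) (A, B) = shuffle_coeff T A B"
proof -
  have "count (Delta_mset T) (A, B)
      = card ((\<lambda>I. (restrict_red [] T I, restrict_red [] T (Le T - I))) -` {(A, B)} \<inter> Pow (Le T))"
    using Delta_mset_eq_leaf_subsets[of T "[]"]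
    by (simp add: count_image_mset leaves_at_def finite_Le)
  also have "\<dots> = shuffle_coeff T A B"
    by (auto simp: shuffle_coeff_def shuffle_sets_def red_leaf_restrict intro!: arg_cong[where f = card])
  finally show ?thesis .
qed

lemma is_shuffle_iff_in_Delta_mset: "is_shuffle T A B \<longleftrightarrow> (A, B) \<in># Delta_mset T"
proof -
  have "finite (shuffle_sets T A B)"
    by (rule finite_subset[of _ "Pow (Le T)"]) (auto simp: shuffle_sets_def finite_Le)
  then have "is_shuffle T A B \<longleftrightarrow> 0 < shuffle_coeff T A B"
    by (auto simp: is_shuffle_def shuffle_coeff_def shuffle_sets_def card_gt_0_iff)
  then show ?thesis
    by (simp flip: count_Delta_mset)
qed

lemma is_mono_Delta_mset: "(A, B) \<in># Delta_mset T \<Longrightarrow> is_mono A \<and> is_mono B"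
  using Delta_mset_eq_leaf_subsets[of T "[]"] is_mono_restrict_red by auto

section \<open>Finiteness\<close>

fun leaf_labels :: "'x tree \<Rightarrow> 'x multiset" where
  "leaf_labels (Leaf x) = {#x#}"
| "leaf_labels (Node ts) = (\<Sum>t\<leftarrow>ts. leaf_labels t)"

lemma set_mset_leaf_labels: "set_mset (leaf_labels T) = set_tree T"
  by (induction T) auto

lemma leaf_labels_vee_mono: "leaf_labels (vee_mono ts) = (\<Sum>t\<leftarrow>ts. leaf_labels t)"
proof -
  let ?us = "filter (\<lambda>t. t \<noteq> Node []) ts"
  have "(\<Sum>t\<leftarrow>?us. leaf_labels t) = (\<Sum>t\<leftarrow>ts. leaf_labels t)"
    by (rule sum_list_map_filter) auto
  then show ?thesis
    by (cases ?us rule: remdups_adj.cases) (simp_all add: vee_mono_def)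
qed

lemma leaf_labels_Delta_mset:
  "(A, B) \<in># Delta_mset T \<Longrightarrow> leaf_labels A + leaf_labels B = leaf_labels T"
proof (induction T arbitrary: A B)
  case (Leaf x)
  then show ?case by auto
next
  case (Node ts)
  then obtain ps where ps: "list_all2 (\<lambda>p t. p \<in># Delta_mset t) ps ts" and AB: "(A, B) = vee_pair ps"
    by (auto simp: in_listset_mset list_all2_map2)
  have "leaf_labels A + leaf_labels B = (\<Sum>p\<leftarrow>ps. leaf_labels (fst p) + leaf_labels (snd p))"
    using AB by (simp add: vee_pair_def leaf_labels_vee_mono sum_list_addf o_def)
  also have "\<dots> = leaf_labels (Node ts)"
    using ps Node.IH by (induction rule: list_all2_induct) auto
  finally show ?case .
qed

lemma finite_trees_size_le: "finite X \<Longrightarrow> finite {T :: 'x tree. size T \<le> n \<and> set_tree T \<subseteq> X}"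
proof (induction n)
  case 0
  have "{T :: 'x tree. size T \<le> 0 \<and> set_tree T \<subseteq> X} \<subseteq> Leaf ` X"
  proof
    fix T :: "'x tree" assume "T \<in> {T. size T \<le> 0 \<and> set_tree T \<subseteq> X}"
    then show "T \<in> Leaf ` X" by (cases T) auto
  qed
  then show ?case
    by (rule finite_subset) (simp add: "0")
next
  case (Suc n)
  let ?smaller = "{T. size T \<le> n \<and> set_tree T \<subseteq> X}"
  have "{T. size T \<le> Suc n \<and> set_tree T \<subseteq> X}
      \<subseteq> Leaf ` X \<union> Node ` {ts. set ts \<subseteq> ?smaller \<and> length ts \<le> n}"
  proof
    fix T assume T: "T \<in> {T. size T \<le> Suc n \<and> set_tree T \<subseteq> X}"
    show "T \<in> Leaf ` X \<union> Node ` {ts. set ts \<subseteq> ?smaller \<and> length ts \<le> n}"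
    proof (cases T)
      case (Leaf x)
      then show ?thesis using T by auto
    next
      case (Node ts)
      then have "sum_list (map size ts) + length ts \<le> n"
        using T by (simp add: size_list_conv_sum_list)
      moreover have "size t \<le> sum_list (map size ts)" if "t \<in> set ts" for t
        using that by (simp add: member_le_sum_list)
      ultimately show ?thesis
        using T Node by force
    qed
  qed
  moreover have "finite (Leaf ` X \<union> Node ` {ts. set ts \<subseteq> ?smaller \<and> length ts \<le> n})"
    using Suc by (simp add: finite_lists_length_le)
  ultimately show ?case
    by (rule finite_subset)
qed

(* size T = 2 * (number of vertices of T) - 1 *)
lemma size_reduced: "reduced T \<Longrightarrow> size T + 3 \<le> 4 * size (leaf_labels T)"
proof (induction T)
  case (Leaf x)
  then show ?case by simp
next
  case (Node ts)
  have "size (Node ts) + 3 \<le> (\<Sum>t\<leftarrow>ts. size t + 3)"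
    using Node.prems by (simp add: size_list_conv_sum_list sum_list_addf sum_list_triv)
  also have "\<dots> \<le> (\<Sum>t\<leftarrow>ts. 4 * size (leaf_labels t))"
    using Node by (intro sum_list_mono) auto
  also have "\<dots> = 4 * size (leaf_labels (Node ts))"
    by (induction ts) simp_all
  finally show ?case .
qed

lemma finite_monos_with_leaf_labels: "finite {T. is_mono T \<and> leaf_labels T = M}"
proof (rule finite_subset)
  show "{T. is_mono T \<and> leaf_labels T = M} \<subseteq> {T. size T \<le> 4 * size M + 1 \<and> set_tree T \<subseteq> set_mset M}"
    using size_reduced by (fastforce simp: is_mono_def set_mset_leaf_labels)
  show "finite {T. size T \<le> 4 * size M + 1 \<and> set_tree T \<subseteq> set_mset M}"
    by (simp add: finite_trees_size_le)
qed

lemma finite_Delta_mset_preimage: "finite {T. is_mono T \<and> (A, B) \<in># Delta_mset T}"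
  using finite_monos_with_leaf_labels[of "leaf_labels A + leaf_labels B"]
  by (rule rev_finite_subset) (auto dest: leaf_labels_Delta_mset)

section \<open>The shuffle product\<close>

lemma shuffle_eq_sum_Delta_mset:
  "(shuffle g1 g2 :: _ \<Rightarrow> 'k::{comm_ring_1,ring_char_0}) T
     = (if is_mono T then \<Sum>P\<in>#Delta_mset T. g1 (fst P) * g2 (snd P) else 0)"
proof (cases "is_mono T")
  case True
  have "supp (\<lambda>P. of_nat (count (Delta_mset T) P) :: 'k) = set_mset (Delta_mset T)"
    by (auto simp: supp_def)
  then have "shuffle g1 g2 T
      = (\<Sum>P \<in> supp (tensor g1 g2) \<inter> set_mset (Delta_mset T). tensor g1 g2 P * of_nat (count (Delta_mset T) P))"
    using True by (simp add: shuffle_def pair2_def Delta_m_eq_count_Delta_mset)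
  also have "\<dots> = (\<Sum>P \<in> set_mset (Delta_mset T). of_nat (count (Delta_mset T) P) * tensor g1 g2 P)"
    by (rule sum.mono_neutral_cong_left) (auto simp: supp_def)
  also have "\<dots> = (\<Sum>P\<in>#Delta_mset T. g1 (fst P) * g2 (snd P))"
    by (simp add: sum_mset_eq_sum_count[of "set_mset (Delta_mset T)"] tensor_def split_def)
  finally show ?thesis
    using True by simp
qed (simp add: shuffle_def)

lemma shuffle_shuffle_left:
  assumes "is_mono T"
  shows "(shuffle (shuffle g1 g2) g3 :: _ \<Rightarrow> 'k::{comm_ring_1,ring_char_0}) T
       = (\<Sum>(A, B, C)\<in>#Delta_iter_left T. g1 A * g2 B * g3 C)"
proof -
  have "shuffle (shuffle g1 g2) g3 T
      = (\<Sum>P\<in>#Delta_mset T. (\<Sum>Q\<in>#Delta_mset (fst P). g1 (fst Q) * g2 (snd Q)) * g3 (snd P))"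
    using assms
    by (auto simp: shuffle_eq_sum_Delta_mset intro!: arg_cong[where f = sum_mset] image_mset_cong
             dest!: is_mono_Delta_mset)
  then show ?thesis
    by (simp add: Delta_iter_left_def sum_mset_sum_mset image_mset_sum_mset sum_mset_distrib_right
                  split_def multiset.map_comp o_def)
qed

lemma shuffle_shuffle_right:
  assumes "is_mono T"
  shows "(shuffle g1 (shuffle g2 g3) :: _ \<Rightarrow> 'k::{comm_ring_1,ring_char_0}) T
       = (\<Sum>(A, B, C)\<in>#Delta_iter_right T. g1 A * g2 B * g3 C)"
proof -
  have "shuffle g1 (shuffle g2 g3) T
      = (\<Sum>P\<in>#Delta_mset T. g1 (fst P) * (\<Sum>Q\<in>#Delta_mset (snd P). g2 (fst Q) * g3 (snd Q)))"
    using assms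
    by (auto simp: shuffle_eq_sum_Delta_mset intro!: arg_cong[where f = sum_mset] image_mset_cong
             dest!: is_mono_Delta_mset)
  then show ?thesis
    by (simp add: Delta_iter_right_def sum_mset_sum_mset image_mset_sum_mset sum_mset_distrib_left
                  split_def multiset.map_comp o_def mult.assoc)
qed

lemma shuffle_assoc:
  "(shuffle (shuffle g1 g2) g3 :: _ \<Rightarrow> 'k::{comm_ring_1,ring_char_0}) = shuffle g1 (shuffle g2 g3)"
proof
  show "shuffle (shuffle g1 g2) g3 T = (shuffle g1 (shuffle g2 g3) :: _ \<Rightarrow> 'k) T" for T
    by (cases "is_mono T")
       (simp_all add: shuffle_shuffle_left shuffle_shuffle_right Delta_mset_coassoc, simp add: shuffle_def)
qed

lemma shuffle_commute:
  "(shuffle g1 g2 :: _ \<Rightarrow> 'k::{comm_ring_1,ring_char_0}) = shuffle g2 g1"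
proof
  fix T
  have "(\<Sum>P\<in>#Delta_mset T. g1 (fst P) * g2 (snd P))
      = (\<Sum>P\<in>#image_mset prod.swap (Delta_mset T). g1 (fst P) * g2 (snd P))"
    by (simp only: Delta_mset_swap)
  also have "\<dots> = (\<Sum>P\<in>#Delta_mset T. g2 (fst P) * g1 (snd P))"
    by (simp add: multiset.map_comp o_def mult.commute)
  finally show "shuffle g1 g2 T = (shuffle g2 g1 :: _ \<Rightarrow> 'k) T"
    by (simp add: shuffle_eq_sum_Delta_mset)
qed

lemma supp_shuffle_subset:
  "supp (shuffle g1 g2 :: _ \<Rightarrow> 'k::{comm_ring_1,ring_char_0})
     \<subseteq> (\<Union>A\<in>supp g1. \<Union>B\<in>supp g2. {T. is_mono T \<and> (A, B) \<in># Delta_mset T})"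
proof
  fix T assume "T \<in> supp (shuffle g1 g2 :: _ \<Rightarrow> 'k)"
  then have "is_mono T" and nonzero: "(\<Sum>P\<in>#Delta_mset T. g1 (fst P) * g2 (snd P)) \<noteq> 0"
    by (auto simp: supp_def shuffle_eq_sum_Delta_mset split: if_splits)
  have "\<exists>P\<in>#Delta_mset T. g1 (fst P) * g2 (snd P) \<noteq> 0"
  proof (rule ccontr)
    assume "\<not> (\<exists>P\<in>#Delta_mset T. g1 (fst P) * g2 (snd P) \<noteq> 0)"
    then have "(\<Sum>P\<in>#Delta_mset T. g1 (fst P) * g2 (snd P)) = 0"
      by (intro sum_mset.neutral) auto
    with nonzero show False ..
  qed
  then obtain A B where "(A, B) \<in># Delta_mset T" "A \<in> supp g1" "B \<in> supp g2"
    by (auto simp: supp_def dest!: mult_not_zero)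
  with \<open>is_mono T\<close> show "T \<in> (\<Union>A\<in>supp g1. \<Union>B\<in>supp g2. {T. is_mono T \<and> (A, B) \<in># Delta_mset T})"
    by blast
qed

lemma inK_shuffle:
  assumes "inK g1" and "inK g2"
  shows "inK (shuffle g1 g2 :: _ \<Rightarrow> 'k::{comm_ring_1,ring_char_0})"
proof -
  have "finite (\<Union>A\<in>supp g1. \<Union>B\<in>supp g2. {T. is_mono T \<and> (A, B) \<in># Delta_mset T})"
    using assms by (simp add: inK_def finite_Delta_mset_preimage)
  then have "finite (supp (shuffle g1 g2 :: _ \<Rightarrow> 'k))"
    by (rule finite_subset[OF supp_shuffle_subset])
  moreover have "supp (shuffle g1 g2 :: _ \<Rightarrow> 'k) \<subseteq> {T. is_mono T}"
    by (auto simp: supp_def shuffle_def)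
  ultimately show ?thesis
    by (simp add: inK_def)
qed

lemma shuffle_mono_vec_apply:
  "(shuffle (mono_vec T1) (mono_vec T2) :: _ \<Rightarrow> 'k::{comm_ring_1,ring_char_0}) S
     = (if is_mono S then of_nat (shuffle_coeff S T1 T2) else 0)"
proof -
  have "(\<Sum>P\<in>#Delta_mset S. (mono_vec T1 (fst P) :: 'k) * mono_vec T2 (snd P))
      = (\<Sum>P\<in>#Delta_mset S. if P = (T1, T2) then 1 else 0)"
    by (intro arg_cong[where f = sum_mset] image_mset_cong) (auto simp: mono_vec_def)
  then show ?thesis
    by (simp add: shuffle_eq_sum_Delta_mset sum_mset_delta count_Delta_mset)
qed

lemma finite_shuffles: "finite {T. is_mono T \<and> is_shuffle T T1 T2}"
  using finite_Delta_mset_preimage by (simp add: is_shuffle_iff_in_Delta_mset)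

lemma shuffle_mono_vec:
  "(shuffle (mono_vec T1) (mono_vec T2) :: _ \<Rightarrow> 'k::{comm_ring_1,ring_char_0})
     = (\<lambda>S. \<Sum>T \<in> {T. is_mono T \<and> is_shuffle T T1 T2}. of_nat (shuffle_coeff T T1 T2) * mono_vec T S)"
proof
  fix S
  let ?Sh = "{T. is_mono T \<and> is_shuffle T T1 T2}"
  have "(\<Sum>T\<in>?Sh. of_nat (shuffle_coeff T T1 T2) * mono_vec T S)
      = (if S \<in> ?Sh then of_nat (shuffle_coeff S T1 T2) else (0 :: 'k))"
    using finite_shuffles[of T1 T2] by (simp add: mono_vec_def if_distrib sum.delta' cong: if_cong)
  moreover have "\<not> is_shuffle S T1 T2 \<Longrightarrow> shuffle_coeff S T1 T2 = 0"
    by (simp add: is_shuffle_iff_in_Delta_mset not_in_iff flip: count_Delta_mset)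
  ultimately show "(shuffle (mono_vec T1) (mono_vec T2) :: _ \<Rightarrow> 'k) S
      = (\<Sum>T\<in>?Sh. of_nat (shuffle_coeff T T1 T2) * mono_vec T S)"
    by (auto simp: shuffle_mono_vec_apply)
qed

lemma shuffle_coeff_pos: "is_shuffle T T1 T2 \<Longrightarrow> 1 \<le> shuffle_coeff T T1 T2"
  by (simp add: is_shuffle_iff_in_Delta_mset Suc_le_eq flip: count_Delta_mset)

lemma shuffle_unit:
  "shuffle (mono_vec (Node []) :: _ \<Rightarrow> 'k::{comm_ring_1,ring_char_0}) (mono_vec (Node []))
     = mono_vec (Node [])"
proof
  fix S :: "'a tree"
  (* a reduced tree has a leaf, while (1, 1) occurs in Delta_mset S only if S has none *)
  have "\<not> is_shuffle S (Node []) (Node [])" if "reduced S"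
    using that size_reduced[of S] leaf_labels_Delta_mset[of "Node []" "Node []" S]
    by (auto simp: is_shuffle_iff_in_Delta_mset)
  then have "is_mono S \<Longrightarrow> shuffle_coeff S (Node []) (Node []) = (if S = Node [] then 1 else 0)"
    by (auto simp: is_mono_def simp flip: count_Delta_mset
             simp add: is_shuffle_iff_in_Delta_mset not_in_iff)
  then show "(shuffle (mono_vec (Node [])) (mono_vec (Node [])) :: _ \<Rightarrow> 'k) S = mono_vec (Node []) S"
    by (simp only: shuffle_mono_vec_apply) (auto simp: mono_vec_def is_mono_def)
qed

theorem proposition4p6p1:
  shows "(\<forall>(g1 :: ('x::countable) tree \<Rightarrow> 'k::field_char_0) g2.
            inK g1 \<and> inK g2 \<longrightarrow> inK (shuffle g1 g2))
       \<and> (\<forall>(g1 :: 'x tree \<Rightarrow> 'k) g2.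
            inK g1 \<and> inK g2 \<longrightarrow> shuffle g1 g2 = shuffle g2 g1)
       \<and> (\<forall>(g1 :: 'x tree \<Rightarrow> 'k) g2 g3.
            inK g1 \<and> inK g2 \<and> inK g3 \<longrightarrow>
              shuffle (shuffle g1 g2) g3 = shuffle g1 (shuffle g2 g3))
       \<and> shuffle (mono_vec (Node []) :: 'x tree \<Rightarrow> 'k) (mono_vec (Node []))
           = mono_vec (Node [])
       \<and> (\<forall>T1 T2 :: 'x tree. is_mono T1 \<and> is_mono T2 \<longrightarrow>
            finite {T. is_mono T \<and> is_shuffle T T1 T2}
          \<and> (\<forall>T. is_mono T \<and> is_shuffle T T1 T2 \<longrightarrow> 1 \<le> shuffle_coeff T T1 T2)
          \<and> (shuffle (mono_vec T1) (mono_vec T2) :: 'x tree \<Rightarrow> 'k)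
              = (\<lambda>S. \<Sum>T \<in> {T. is_mono T \<and> is_shuffle T T1 T2}.
                       of_nat (shuffle_coeff T T1 T2) * mono_vec T S))"
  using inK_shuffle shuffle_commute shuffle_assoc shuffle_unit
    finite_shuffles shuffle_coeff_pos shuffle_mono_vec
  by blast

end
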